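(* For every $b\in\mathbb N$, every $\mathfrak a\in I_K$ and every $m\in\mathbb Z$ one has \[ G^b(\mathfrak a,m,0)=\frac{N_{bD}(\mathfrak a,m)}{D}. \]
   Context: Let $K$ be a real quadratic number field whose discriminant $D$ is odd (so $D>1$, $D\equiv 1 \pmod 4$ and $D$ is squarefree). Let $\mathcal O_K$ be its ring of integers, $x\mapsto x'$ the nontrivial automorphism of $K$, $N(x)=xx'$ and $\mathrm{tr}(x)=x+x'$. Let $I_K$ be the group of nonzero fractional ideals of $K$. For $\mathfrak a\in I_K$ let $N(\mathfrak a)\in\mathbb Q_{>0}$ denote its absolute norm; it is multiplicative and $N(x\mathcal O_K)=|N(x)|$. Let $\mathfrak d=\sqrt D\,\mathcal O_K$ be the different. Put $e(x)=e^{2\pi i x}$. For $b\in\mathbb N$, $\mathfrak a\in I_K$ and $m\in\mathbb Z$ define \[ G^b(\mathfrak a,m,0)=\#\Big\{\lambda\in \mathfrak a\mathfrak d^{-1}/b\mathfrak a : \tfrac{N(\lambda)}{N(\mathfrak a)}\equiv -\tfrac{m}{D}\pmod{b\mathbb Z}\Big\}, \] where the congruence means that the difference of the two rational numbers lies in $b\mathbb Z$. Further define \[ R_b(\mathfrak a,m)=\Big\{\lambda\in\mathfrak a/b\mathfrak a : \tfrac{N(\lambda)}{N(\mathfrak a)}\equiv m\pmod b\Big\},\qquad N_b(\mathfrak a,m)=\#R_b(\mathfrak a,m) \] (for $\lambda\in\mathfrak a$ the number $N(\lambda)/N(\mathfrak a)$ is an integer whose class mod $b$ depends only on $\lambda$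 mod $b\mathfrak a$). *)

theory Defs
  imports Complex_Main "HOL-Library.Product_Plus" "HOL-Computational_Algebra.Squarefree"
begin

text \<open>The real quadratic field K = Q(sqrt D) is modelled as rat \<times> rat, the pair (x, y)
  standing for x + y * sqrt D.  Addition and zero are componentwise (Product_Plus).\<close>

type_synonym qelt = "rat \<times> rat"

definition kmul :: "int \<Rightarrow> qelt \<Rightarrow> qelt \<Rightarrow> qelt" where
  "kmul D u v = (fst u * fst v + of_int D * snd u * snd v, fst u * snd v + snd u * fst v)"

definition kscale :: "rat \<Rightarrow> qelt \<Rightarrow> qelt" where
  "kscale c u = (c * fst u, c * snd u)"

definition kconj :: "qelt \<Rightarrow> qelt" where
  "kconj u = (fst u, - snd u)"

definition knorm :: "int \<Rightarrow> qelt \<Rightarrow> rat" where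
  "knorm D u = fst (kmul D u (kconj u))"

definition ktr :: "qelt \<Rightarrow> rat" where
  "ktr u = fst (u + kconj u)"

text \<open>Ring of integers: elements whose characteristic polynomial X^2 - tr(x) X + N(x)
  has integer coefficients (i.e. the algebraic integers of K).\<close>
definition OK :: "int \<Rightarrow> qelt set" where
  "OK D = {u. ktr u \<in> \<int> \<and> knorm D u \<in> \<int>}"

definition frac_ideal :: "int \<Rightarrow> qelt set \<Rightarrow> bool" where
  "frac_ideal D A \<longleftrightarrow> 0 \<in> A \<and> A \<noteq> {0}
     \<and> (\<forall>u\<in>A. \<forall>v\<in>A. u + v \<in> A)
     \<and> (\<forall>r\<in>OK D. \<forall>u\<in>A. kmul D r u \<in> A)
     \<and> (\<exists>d::nat. d > 0 \<and> kscale (of_nat d) ` A \<subseteq> OK D)"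

definition ideal_mult :: "int \<Rightarrow> qelt set \<Rightarrow> qelt set \<Rightarrow> qelt set" where
  "ideal_mult D A B = {x. \<exists>(n::nat) f g. (\<forall>i<n. f i \<in> A \<and> g i \<in> B)
                               \<and> x = (\<Sum>i<n. kmul D (f i) (g i))}"

definition cosets :: "qelt set \<Rightarrow> qelt set \<Rightarrow> qelt set set" where
  "cosets A B = (\<lambda>x. (\<lambda>y. x + y) ` B) ` A"

definition ideal_norm :: "int \<Rightarrow> qelt set \<Rightarrow> rat" where
  "ideal_norm D A = (let d = (LEAST d::nat. d > 0 \<and> kscale (of_nat d) ` A \<subseteq> OK D) in
      of_nat (card (cosets (OK D) (kscale (of_nat d) ` A))) / of_nat d ^ 2)"

definition different :: "int \<Rightarrow> qelt set" where
  "different D = (\<lambda>u. kmul D (0, 1) u) ` OK D"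

definition inv_different :: "int \<Rightarrow> qelt set" where
  "inv_different D = {x. \<forall>y\<in>different D. kmul D x y \<in> OK D}"

definition rat_cong :: "rat \<Rightarrow> rat \<Rightarrow> int \<Rightarrow> bool" where
  "rat_cong q r b \<longleftrightarrow> (\<exists>k::int. q - r = of_int b * of_int k)"

definition G_sum :: "int \<Rightarrow> nat \<Rightarrow> qelt set \<Rightarrow> int \<Rightarrow> nat" where
  "G_sum D b A m = card ((\<lambda>x. (\<lambda>y. x + y) ` (kscale (of_nat b) ` A)) `
      {l \<in> ideal_mult D A (inv_different D).
          rat_cong (knorm D l / ideal_norm D A) (- of_int m / of_int D) (int b)})"

definition N_count :: "int \<Rightarrow> nat \<Rightarrow> qelt set \<Rightarrow> int \<Rightarrow> nat" where
  "N_count D b A m = card ((\<lambda>x. (\<lambda>y. x + y) ` (kscale (of_nat b) ` A)) `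
      {l \<in> A. rat_cong (knorm D l / ideal_norm D A) (of_int m) (int b)})"

end

theory Submission
  imports Defs
begin

text \<open>Multiplication by \<open>1/\<surd>D\<close> maps \<open>\<a>\<close> onto \<open>\<a>\<d>\<inverse>\<close> and satisfies \<open>N(\<lambda>/\<surd>D) = -N(\<lambda>)/D\<close>, so it
  identifies \<open>G\<^sup>b(\<a>,m,0)\<close> with the number of classes modulo \<open>b\<surd>D\<a>\<close> of the set \<open>P\<close> of all
  \<open>\<lambda> \<in> \<a>\<close> with \<open>N(\<lambda>)/N(\<a>) \<equiv> m (mod bD)\<close>, while \<open>N\<^sub>b\<^sub>D(\<a>,m)\<close> counts the classes of \<open>P\<close> modulo
  \<open>bD\<a>\<close>.  Because \<open>\<lambda>\<mu>' \<in> N(\<a>)\<O>\<^sub>K\<close> for \<open>\<lambda>, \<mu> \<in> \<a>\<close>, the set \<open>P\<close> is stable under translation by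
  \<open>b\<surd>D\<a>\<close>, so every class modulo \<open>b\<surd>D\<a>\<close> meeting \<open>P\<close> splits into
  \<open>[b\<surd>D\<a> : bD\<a>] = [\<a> : \<surd>D\<a>]\<close> classes modulo \<open>bD\<a>\<close>.  Finally \<open>[\<a> : \<surd>D\<a>]\<^sup>2 = [\<a> : D\<a>] = D\<^sup>2\<close>
  since \<open>\<a>\<close> is a lattice of rank two, which follows from the Hermite normal form of integral
  ideals.\<close>

section \<open>Counting cosets in abelian groups\<close>

definition add_subgroup :: "'a::ab_group_add set \<Rightarrow> bool" where
  "add_subgroup H \<longleftrightarrow> 0 \<in> H \<and> (\<forall>x\<in>H. \<forall>y\<in>H. x + y \<in> H) \<and> (\<forall>x\<in>H. - x \<in> H)"

definition add_cosets :: "'a::ab_group_add set \<Rightarrow> 'a set \<Rightarrow> 'a set set" where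
  "add_cosets P H = (\<lambda>x. (\<lambda>y. x + y) ` H) ` P"

lemma cosets_eq_add_cosets: "cosets = add_cosets"
  unfolding cosets_def add_cosets_def by (intro ext) (rule refl)

lemma add_subgroup_add: "add_subgroup H \<Longrightarrow> x \<in> H \<Longrightarrow> y \<in> H \<Longrightarrow> x + y \<in> H"
  unfolding add_subgroup_def by blast

lemma add_subgroup_diff: "add_subgroup H \<Longrightarrow> x \<in> H \<Longrightarrow> y \<in> H \<Longrightarrow> x - y \<in> H"
  unfolding add_subgroup_def by (metis diff_conv_add_uminus)

lemma coset_eq_iff:
  fixes u v :: "'a::ab_group_add"
  assumes H: "add_subgroup H"
  shows "(\<lambda>y. u + y) ` H = (\<lambda>y. v + y) ` H \<longleftrightarrow> u - v \<in> H"
proof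
  assume "(\<lambda>y. u + y) ` H = (\<lambda>y. v + y) ` H"
  moreover have "u + 0 \<in> (\<lambda>y. u + y) ` H" using H unfolding add_subgroup_def by blast
  ultimately obtain h where "h \<in> H" "u = v + h" by auto
  thus "u - v \<in> H" by simp
next
  assume d: "u - v \<in> H"
  show "(\<lambda>y. u + y) ` H = (\<lambda>y. v + y) ` H"
  proof (intro set_eqI iffI)
    fix z assume "z \<in> (\<lambda>y. u + y) ` H"
    then obtain h where "h \<in> H" "z = v + ((u - v) + h)" by auto
    thus "z \<in> (\<lambda>y. v + y) ` H" using add_subgroup_add[OF H d] by blast
  next
    fix z assume "z \<in> (\<lambda>y. v + y) ` H"
    then obtain h where "h \<in> H" "z = u + (h - (u - v))" by auto
    thus "z \<in> (\<lambda>y. u + y) ` H" using add_subgroup_diff[OF H _ d] by blast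
  qed
qed

lemma card_eq_mult_card_image:
  assumes img: "f ` X = Y" and fib: "\<And>y. y \<in> Y \<Longrightarrow> card {x\<in>X. f x = y} = c"
  shows "card X = c * card Y"
proof -
  have X: "X = (\<Union>y\<in>Y. {x\<in>X. f x = y})" using img by auto
  show ?thesis
  proof (cases "finite Y \<and> (\<forall>y\<in>Y. finite {x\<in>X. f x = y})")
    case True
    hence "card X = (\<Sum>y\<in>Y. card {x\<in>X. f x = y})"
      by (subst X) (rule card_UN_disjoint, auto)
    also have "\<dots> = c * card Y" using fib by simp
    finally show ?thesis .
  next
    case False
    have "infinite X"
    proof
      assume "finite X"
      hence "finite Y" and "\<forall>y\<in>Y. finite {x\<in>X. f x = y}" using img by auto
      thus False using False by blast
    qed
    moreover have "c = 0 \<or> card Y = 0" using False fib by force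
    ultimately show ?thesis by auto
  qed
qed

lemma add_subgroup_image:
  fixes f :: "'a::ab_group_add \<Rightarrow> 'b::ab_group_add"
  assumes add: "\<And>x y. f (x + y) = f x + f y" and H: "add_subgroup H"
  shows "add_subgroup (f ` H)"
  unfolding add_subgroup_def
proof (intro conjI ballI)
  have f0: "f 0 = 0" using add[of 0 0] by simp
  thus "0 \<in> f ` H" using H unfolding add_subgroup_def by (metis image_eqI)
  fix x y assume "x \<in> f ` H" "y \<in> f ` H"
  then obtain u v where uv: "u \<in> H" "v \<in> H" "x = f u" "y = f v" by blast
  have "f u + f (- u) = 0" using add[of u "- u"] f0 by simp
  hence "- f u = f (- u)" by (rule add.inverse_unique)
  moreover have "u + v \<in> H" "- u \<in> H" using H uv(1,2) unfolding add_subgroup_def by blast+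
  ultimately show "x + y \<in> f ` H" "- x \<in> f ` H" unfolding uv(3,4) add[symmetric] by auto
qed

lemma card_cosets_eq_index_mult:
  fixes P G H :: "'a::ab_group_add set"
  assumes G: "add_subgroup G" and H: "add_subgroup H" and HG: "H \<subseteq> G"
    and P: "\<And>x g. x \<in> P \<Longrightarrow> g \<in> G \<Longrightarrow> x + g \<in> P"
  shows "card (add_cosets P H) = card (add_cosets G H) * card (add_cosets P G)"
proof (rule card_eq_mult_card_image)
  define E where "E C = (\<Union>x\<in>C. (\<lambda>z. x + z) ` G)" for C
  have E: "E ((\<lambda>y. u + y) ` H) = (\<lambda>z. u + z) ` G" for u
  proof (intro set_eqI iffI)
    fix z assume "z \<in> E ((\<lambda>y. u + y) ` H)"
    then obtain h g where "h \<in> H" "g \<in> G" "z = u + (h + g)" unfolding E_def by (auto simp: add.assoc)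
    thus "z \<in> (\<lambda>z. u + z) ` G" using add_subgroup_add[OF G] HG by blast
  next
    fix z assume "z \<in> (\<lambda>z. u + z) ` G"
    then obtain g where "g \<in> G" "z = (u + 0) + g" by auto
    moreover have "0 \<in> H" using H unfolding add_subgroup_def by blast
    ultimately show "z \<in> E ((\<lambda>y. u + y) ` H)" unfolding E_def by blast
  qed
  show "E ` add_cosets P H = add_cosets P G"
    unfolding add_cosets_def by (simp only: image_image E)
  fix Y assume "Y \<in> add_cosets P G"
  then obtain y where y: "y \<in> P" "Y = (\<lambda>z. y + z) ` G" unfolding add_cosets_def by auto
  \<comment> \<open>the classes modulo \<open>H\<close> inside \<open>y + G\<close> are the translates by \<open>y\<close> of the classes of \<open>G/H\<close>\<close>
  have fiber: "{C \<in> add_cosets P H. E C = Y} = (\<lambda>S. (\<lambda>z. y + z) ` S) ` add_cosets G H"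
  proof (intro set_eqI iffI)
    fix C assume "C \<in> {C \<in> add_cosets P H. E C = Y}"
    then obtain x where x: "C = (\<lambda>z. x + z) ` H" "E C = Y" unfolding add_cosets_def by blast
    hence "(\<lambda>z. x + z) ` G = (\<lambda>z. y + z) ` G" using y(2) E by simp
    hence "x - y \<in> G" using coset_eq_iff[OF G] by blast
    moreover have "C = (\<lambda>z. y + z) ` ((\<lambda>z. (x - y) + z) ` H)" using x(1) by (auto simp: image_image)
    ultimately show "C \<in> (\<lambda>S. (\<lambda>z. y + z) ` S) ` add_cosets G H" unfolding add_cosets_def by blast
  next
    fix C assume "C \<in> (\<lambda>S. (\<lambda>z. y + z) ` S) ` add_cosets G H"
    then obtain g where g: "g \<in> G" "C = (\<lambda>z. (y + g) + z) ` H"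
      unfolding add_cosets_def by (auto simp: image_image add.assoc)
    have "C \<in> add_cosets P H" using P[OF y(1) g(1)] g(2) unfolding add_cosets_def by blast
    moreover have "E C = Y" using coset_eq_iff[OF G, of "y + g" y] g y(2) E by simp
    ultimately show "C \<in> {C \<in> add_cosets P H. E C = Y}" by blast
  qed
  have "inj ((+) y)" by (rule injI) simp
  thus "card {C \<in> add_cosets P H. E C = Y} = card (add_cosets G H)"
    unfolding fiber by (rule card_image[OF inj_on_image[OF inj_on_subset[OF _ subset_UNIV]]])
qed

lemma index_mult:
  fixes G G' H :: "'a::ab_group_add set"
  assumes "add_subgroup G" "add_subgroup G'" "add_subgroup H" "H \<subseteq> G'" "G' \<subseteq> G"
  shows "card (add_cosets G H) = card (add_cosets G' H) * card (add_cosets G G')"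
  using assms by (intro card_cosets_eq_index_mult) (auto intro: add_subgroup_add)

lemma card_cosets_image:
  fixes f :: "'a::ab_group_add \<Rightarrow> 'b::ab_group_add"
  assumes add: "\<And>x y. f (x + y) = f x + f y" and inj: "inj f"
  shows "card (add_cosets (f ` P) (f ` H)) = card (add_cosets P H)"
proof -
  have "add_cosets (f ` P) (f ` H) = (\<lambda>S. f ` S) ` add_cosets P H"
    unfolding add_cosets_def image_image by (simp add: add)
  thus ?thesis using card_image[OF inj_on_image[OF inj_on_subset[OF inj subset_UNIV]]] by simp
qed

lemma knorm_eq: "knorm D u = fst u ^ 2 - of_int D * snd u ^ 2"
  by (simp add: knorm_def kmul_def kconj_def power2_eq_square)

lemma ktr_eq: "ktr u = 2 * fst u"
  by (simp add: ktr_def kconj_def)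

lemma kmul_comm: "kmul D x y = kmul D y x"
  unfolding kmul_def by (simp add: algebra_simps)

lemma kmul_assoc: "kmul D (kmul D x y) z = kmul D x (kmul D y z)"
  unfolding kmul_def by (simp add: algebra_simps)

lemma kmul_add_right: "kmul D x (y + z) = kmul D x y + kmul D x z"
  unfolding kmul_def by (simp add: algebra_simps)

lemma kmul_kscale_left: "kmul D (kscale s x) y = kscale s (kmul D x y)"
  unfolding kmul_def kscale_def by (simp add: algebra_simps)

lemma kmul_kscale_right: "kmul D x (kscale s y) = kscale s (kmul D x y)"
  unfolding kmul_def kscale_def by (simp add: algebra_simps)

lemma kmul_kconj_self: "kmul D x (kconj x) = (knorm D x, 0)"
  unfolding kmul_def kconj_def knorm_def by (simp add: algebra_simps)

lemma kconj_kscale: "kconj (kscale s x) = kscale s (kconj x)"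
  by (simp add: kconj_def kscale_def)

lemma kscale_kscale: "kscale s (kscale t x) = kscale (s * t) x"
  by (simp add: kscale_def)

lemma kscale_one [simp]: "kscale 1 x = x"
  by (simp add: kscale_def)

lemma kscale_add: "kscale s (x + y) = kscale s x + kscale s y"
  by (simp add: kscale_def algebra_simps)

lemma kscale_eq_0_iff: "kscale s x = 0 \<longleftrightarrow> s = 0 \<or> x = 0"
  by (cases x) (auto simp: kscale_def zero_prod_def)

lemma inj_kscale: "s \<noteq> 0 \<Longrightarrow> inj (kscale s)"
  by (rule inj_on_inverseI[of _ "kscale (1 / s)"]) (simp add: kscale_kscale)

definition lincomb :: "qelt \<Rightarrow> qelt \<Rightarrow> int \<Rightarrow> int \<Rightarrow> qelt" where
  "lincomb e1 e2 s t = kscale (of_int s) e1 + kscale (of_int t) e2"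

definition lattice :: "qelt \<Rightarrow> qelt \<Rightarrow> qelt set" where
  "lattice e1 e2 = {lincomb e1 e2 s t | s t. True}"

definition det2 :: "qelt \<Rightarrow> qelt \<Rightarrow> rat" where
  "det2 e1 e2 = fst e1 * snd e2 - snd e1 * fst e2"

lemma lincomb_eq:
  "lincomb e1 e2 s t = (of_int s * fst e1 + of_int t * fst e2, of_int s * snd e1 + of_int t * snd e2)"
  by (simp add: lincomb_def kscale_def)

lemma lincomb_add: "lincomb e1 e2 s t + lincomb e1 e2 s' t' = lincomb e1 e2 (s + s') (t + t')"
  by (simp add: lincomb_eq algebra_simps)

lemma lincomb_diff: "lincomb e1 e2 s t - lincomb e1 e2 s' t' = lincomb e1 e2 (s - s') (t - t')"
  by (simp add: lincomb_eq algebra_simps)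

lemma lincomb_in_lattice [simp]: "lincomb e1 e2 s t \<in> lattice e1 e2"
  unfolding lattice_def by blast

lemma add_subgroup_lattice: "add_subgroup (lattice e1 e2)"
  unfolding add_subgroup_def lattice_def
proof (intro conjI ballI)
  show "0 \<in> {lincomb e1 e2 s t | s t. True}"
    by (intro CollectI exI[of _ 0]) (simp add: lincomb_eq zero_prod_def)
  fix x y assume "x \<in> {lincomb e1 e2 s t | s t. True}" "y \<in> {lincomb e1 e2 s t | s t. True}"
  then obtain s t s' t' where "x = lincomb e1 e2 s t" "y = lincomb e1 e2 s' t'" by blast
  moreover have "- lincomb e1 e2 s t = lincomb e1 e2 (- s) (- t)" by (simp add: lincomb_eq)
  ultimately show "x + y \<in> {lincomb e1 e2 s t | s t. True}" "- x \<in> {lincomb e1 e2 s t | s t. True}"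
    by (auto simp: lincomb_add)
qed

lemma lincomb_inj:
  assumes det: "det2 e1 e2 \<noteq> 0" and eq: "lincomb e1 e2 s t = lincomb e1 e2 s' t'"
  shows "s = s' \<and> t = t'"
proof -
  let ?x = "of_int (s - s') :: rat" and ?y = "of_int (t - t') :: rat"
  have "lincomb e1 e2 (s - s') (t - t') = 0" using eq lincomb_diff[of e1 e2 s t s' t'] by simp
  hence 1: "?x * fst e1 + ?y * fst e2 = 0" and 2: "?x * snd e1 + ?y * snd e2 = 0"
    unfolding lincomb_eq by (simp_all add: zero_prod_def)
  \<comment> \<open>Cramer's rule\<close>
  have "?x * det2 e1 e2 = snd e2 * (?x * fst e1 + ?y * fst e2) - fst e2 * (?x * snd e1 + ?y * snd e2)"
    unfolding det2_def by (simp add: algebra_simps)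
  hence "?x = 0" using 1 2 det by simp
  moreover have "?y * det2 e1 e2 = fst e1 * (?x * snd e1 + ?y * snd e2) - snd e1 * (?x * fst e1 + ?y * fst e2)"
    unfolding det2_def by (simp add: algebra_simps)
  hence "?y = 0" using 1 2 det by simp
  ultimately show ?thesis by simp
qed

lemma kscale_lincomb: "kscale c (lincomb e1 e2 s t) = lincomb (kscale c e1) (kscale c e2) s t"
  by (simp add: lincomb_eq kscale_def algebra_simps)

lemma kscale_of_int_lincomb: "kscale (of_int k) (lincomb e1 e2 s t) = lincomb e1 e2 (k * s) (k * t)"
  by (simp add: lincomb_eq kscale_def algebra_simps)

lemma kscale_lattice: "kscale c ` lattice e1 e2 = lattice (kscale c e1) (kscale c e2)"
  unfolding lattice_def image_Collect by (metis (no_types, opaque_lifting) kscale_lincomb)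

lemma det2_kscale: "det2 (kscale c e1) (kscale c e2) = c ^ 2 * det2 e1 e2"
  by (simp add: det2_def kscale_def power2_eq_square algebra_simps)

lemma lattice_triangular:
  "lattice (kscale (of_int a) e1) (kscale (of_int c) e1 + kscale (of_int g) e2)
   = {lincomb e1 e2 (r * a + q * c) (q * g) | r q. True}"
proof -
  have "lincomb (kscale (of_int a) e1) (kscale (of_int c) e1 + kscale (of_int g) e2) r q
         = lincomb e1 e2 (r * a + q * c) (q * g)" for r q
    by (simp add: lincomb_eq kscale_def algebra_simps)
  thus ?thesis unfolding lattice_def by simp
qed

lemma residues_eq_if_diff_multiple:
  fixes y y' g q :: int
  assumes "0 \<le> y" "y < g" "0 \<le> y'" "y' < g" "y - y' = q * g"
  shows "y = y'"
proof -
  have "y = y' + q * g" using assms(5) by simp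
  hence "y mod g = y' mod g" by simp
  thus ?thesis using assms(1-4) by (simp add: mod_pos_pos_trivial)
qed

text \<open>The residues \<open>0 \<le> s < a\<close>, \<open>0 \<le> t < g\<close> represent the classes modulo the triangular sublattice.\<close>

lemma card_cosets_triangular:
  assumes det: "det2 e1 e2 \<noteq> 0" and a: "a > 0" and g: "g > 0"
  shows "card (cosets (lattice e1 e2)
            (lattice (kscale (of_int a) e1) (kscale (of_int c) e1 + kscale (of_int g) e2)))
         = nat (a * g)"
proof -
  define H where "H = lattice (kscale (of_int a) e1) (kscale (of_int c) e1 + kscale (of_int g) e2)"
  have H: "add_subgroup H" unfolding H_def by (rule add_subgroup_lattice)
  have memH: "lincomb e1 e2 s t \<in> H \<longleftrightarrow> (\<exists>r q. s = r * a + q * c \<and> t = q * g)" for s t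
    unfolding H_def lattice_triangular using lincomb_inj[OF det] by blast
  define coset_of where "coset_of p = (\<lambda>z. lincomb e1 e2 (fst p) (snd p) + z) ` H" for p
  define R where "R = {0..<a} \<times> {0..<g}"
  have "inj_on coset_of R"
  proof (rule inj_onI)
    fix p p' assume p: "p \<in> R" and p': "p' \<in> R" and "coset_of p = coset_of p'"
    hence "lincomb e1 e2 (fst p) (snd p) - lincomb e1 e2 (fst p') (snd p') \<in> H"
      unfolding coset_of_def using coset_eq_iff[OF H] by blast
    then obtain r q where rq: "fst p - fst p' = r * a + q * c" "snd p - snd p' = q * g"
      unfolding lincomb_diff memH by blast
    have "snd p = snd p'" using residues_eq_if_diff_multiple rq(2) p p' unfolding R_def by auto
    hence "q = 0" using rq(2) g by simp
    hence "fst p = fst p'" using residues_eq_if_diff_multiple rq(1) p p' unfolding R_def by auto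
    thus "p = p'" using \<open>snd p = snd p'\<close> by (simp add: prod_eq_iff)
  qed
  moreover have "coset_of ` R = cosets (lattice e1 e2) H"
  proof (intro set_eqI iffI)
    fix C assume "C \<in> coset_of ` R"
    thus "C \<in> cosets (lattice e1 e2) H" unfolding coset_of_def cosets_def by auto
  next
    fix C assume "C \<in> cosets (lattice e1 e2) H"
    then obtain s t where C: "C = (\<lambda>z. lincomb e1 e2 s t + z) ` H"
      unfolding cosets_def lattice_def by blast
    define q where "q = t div g"
    define r where "r = (s - q * c) div a"
    have "s - (s - q * c) mod a = r * a + q * c" "t - t mod g = q * g"
      using div_mult_mod_eq[of "s - q * c" a] div_mult_mod_eq[of t g] unfolding r_def q_def by linarith+
    hence "lincomb e1 e2 s t - lincomb e1 e2 ((s - q * c) mod a) (t mod g) \<in> H"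
      unfolding lincomb_diff memH by blast
    hence "C = coset_of ((s - q * c) mod a, t mod g)" unfolding C coset_of_def using coset_eq_iff[OF H] by simp
    moreover have "((s - q * c) mod a, t mod g) \<in> R" unfolding R_def using a g by simp
    ultimately show "C \<in> coset_of ` R" by blast
  qed
  ultimately have "card (cosets (lattice e1 e2) H) = card R" by (metis card_image)
  also have "\<dots> = nat (a * g)" unfolding R_def using a g by (simp add: nat_mult_distrib)
  finally show ?thesis unfolding H_def .
qed

section \<open>The ring of integers\<close>

lemma Ints_of_squarefree_mult_square:
  fixes c :: int and q :: rat
  assumes sq: "squarefree c" and h: "of_int c * q ^ 2 \<in> \<int>"
  shows "q \<in> \<int>"
proof -
  obtain p r where qr: "quotient_of q = (p, r)" by (cases "quotient_of q") auto
  have r0: "r > 0" and cop: "coprime p r" and q: "q = of_int p / of_int r"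
    using quotient_of_denom_pos[OF qr] quotient_of_coprime[OF qr] quotient_of_div[OF qr] .
  from h obtain j where "of_int c * q ^ 2 = of_int j" by (auto elim: Ints_cases)
  hence "of_int c * of_int p ^ 2 = (of_int j * of_int r ^ 2 :: rat)"
    using r0 unfolding q by (simp add: field_simps power2_eq_square)
  hence "c * p ^ 2 = j * r ^ 2" by (metis of_int_eq_iff of_int_mult of_int_power)
  hence "r ^ 2 dvd c * p ^ 2" by simp
  moreover have "coprime (r ^ 2) (p ^ 2)" using cop by (simp add: coprime_commute)
  ultimately have "r ^ 2 dvd c" using coprime_dvd_mult_left_iff by blast
  hence "is_unit r" using sq unfolding squarefree_def by blast
  hence "r = 1" using r0 by simp
  thus ?thesis using q by simp
qed

abbreviation \<omega> :: qelt where "\<omega> \<equiv> (1/2, 1/2)"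

lemma lincomb_basis: "lincomb (1, 0) \<omega> s t = (of_int s + of_int t / 2, of_int t / 2)"
  by (simp add: lincomb_eq)

lemma det2_basis: "det2 (1, 0) \<omega> \<noteq> 0"
  by (simp add: det2_def)

locale quadratic_field =
  fixes D :: int
  assumes D_gt_1: "D > 1" and D_mod_4: "D mod 4 = 1" and squarefree_D: "squarefree D"
begin

definition \<kappa> :: int where "\<kappa> = D div 4"

lemma D_eq: "D = 4 * \<kappa> + 1"
  using D_mod_4 div_mult_mod_eq[of D 4] unfolding \<kappa>_def by simp

lemma D_eq_rat: "(of_int D :: rat) = 4 * of_int \<kappa> + 1"
  using D_eq by (metis of_int_1 of_int_add of_int_mult of_int_numeral)

text \<open>For \<open>u = x + y\<surd>D \<in> \<O>\<^sub>K\<close> the numbers \<open>p = 2x\<close>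
  and \<open>q = 2y\<close> are integers because \<open>Dq\<^sup>2 = p\<^sup>2 - 4N(u)\<close> and \<open>D\<close> is squarefree, and they have
  the same parity because \<open>p\<^sup>2 - q\<^sup>2 \<equiv> p\<^sup>2 - Dq\<^sup>2 \<equiv> 0 (mod 4)\<close>.\<close>

lemma OK_eq_lattice: "OK D = lattice (1, 0) \<omega>"
proof (intro set_eqI iffI)
  fix u assume "u \<in> OK D"
  then obtain p n where p: "2 * fst u = of_int p" and n: "fst u ^ 2 - of_int D * snd u ^ 2 = of_int n"
    unfolding OK_def knorm_eq ktr_eq by (auto elim!: Ints_cases)
  have "of_int D * (2 * snd u) ^ 2 = (2 * fst u) ^ 2 - 4 * (fst u ^ 2 - of_int D * snd u ^ 2)"
    by (simp add: power2_eq_square algebra_simps)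
  also have "\<dots> = of_int (p ^ 2 - 4 * n)" unfolding n p by simp
  finally have "of_int D * (2 * snd u) ^ 2 \<in> \<int>" by simp
  hence "2 * snd u \<in> \<int>" by (rule Ints_of_squarefree_mult_square[OF squarefree_D])
  then obtain q where q: "2 * snd u = of_int q" by (auto elim: Ints_cases)
  have "(of_int (p ^ 2 - q ^ 2) :: rat) = (2 * fst u) ^ 2 - (2 * snd u) ^ 2"
    unfolding p q by simp
  also have "\<dots> = 4 * (fst u ^ 2 - of_int D * snd u ^ 2) + 4 * of_int \<kappa> * (2 * snd u) ^ 2"
    unfolding D_eq_rat by (simp add: power2_eq_square algebra_simps)
  also have "\<dots> = of_int (4 * (n + \<kappa> * q ^ 2))" unfolding n q by simp
  finally have "(p - q) * (p + q) = 4 * (n + \<kappa> * q ^ 2)"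
    by (simp only: of_int_eq_iff power2_eq_square algebra_simps)
  hence "even ((p - q) * (p + q))" by simp
  hence "even (p - q)" by auto
  then obtain a where "p - q = 2 * a" by blast
  hence "p = 2 * a + q" by simp
  hence "u = lincomb (1, 0) \<omega> a q" using p q by (cases u) (simp add: lincomb_basis field_simps)
  thus "u \<in> lattice (1, 0) \<omega>" by simp
next
  fix u assume "u \<in> lattice (1, 0) \<omega>"
  then obtain a b where u: "u = lincomb (1, 0) \<omega> a b" unfolding lattice_def by blast
  have "ktr u = of_int (2 * a + b)" by (simp add: ktr_eq u lincomb_basis)
  moreover have "knorm D u = of_int (a ^ 2 + a * b - \<kappa> * b ^ 2)"
    by (simp add: knorm_eq u lincomb_basis D_eq_rat power2_eq_square field_simps)
  ultimately show "u \<in> OK D" unfolding OK_def by simp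
qed

lemma kmul_lincomb_basis:
  "kmul D (lincomb (1, 0) \<omega> a b) (lincomb (1, 0) \<omega> c d)
   = lincomb (1, 0) \<omega> (a * c + \<kappa> * b * d) (a * d + b * c + b * d)"
  unfolding kmul_def lincomb_basis D_eq_rat by (simp add: field_simps)

lemma kconj_lincomb_basis: "kconj (lincomb (1, 0) \<omega> a b) = lincomb (1, 0) \<omega> (a + b) (- b)"
  unfolding kconj_def lincomb_basis by (simp add: field_simps)

lemma lincomb_basis_in_OK [simp]: "lincomb (1, 0) \<omega> a b \<in> OK D"
  unfolding OK_eq_lattice by simp

lemma OK_kmul:
  assumes "x \<in> OK D" "y \<in> OK D" shows "kmul D x y \<in> OK D"
proof -
  obtain a b c d where "x = lincomb (1, 0) \<omega> a b" "y = lincomb (1, 0) \<omega> c d"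
    using assms unfolding OK_eq_lattice lattice_def by blast
  thus ?thesis by (simp add: kmul_lincomb_basis)
qed

lemma OK_kconj:
  assumes "x \<in> OK D" shows "kconj x \<in> OK D"
proof -
  obtain a b where "x = lincomb (1, 0) \<omega> a b" using assms unfolding OK_eq_lattice lattice_def by blast
  thus ?thesis by (simp add: kconj_lincomb_basis)
qed

lemma knorm_nonzero:
  assumes "x \<noteq> 0" shows "knorm D x \<noteq> 0"
proof
  assume "knorm D x = 0"
  hence e: "fst x ^ 2 = of_int D * snd x ^ 2" unfolding knorm_eq by simp
  have "snd x \<noteq> 0"
  proof
    assume "snd x = 0"
    moreover from this have "fst x = 0" using e by simp
    ultimately show False using assms by (simp add: prod_eq_iff)
  qed
  define r where "r = fst x / snd x"
  have r: "r ^ 2 = of_int D" using e \<open>snd x \<noteq> 0\<close> unfolding r_def by (simp add: power_divide)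
  hence "of_int 1 * r ^ 2 \<in> \<int>" by simp
  hence "r \<in> \<int>" by (rule Ints_of_squarefree_mult_square[OF squarefree_1])
  then obtain j where "r = of_int j" by (auto elim: Ints_cases)
  hence j: "j ^ 2 = D" using r by (metis of_int_eq_iff of_int_power)
  hence "is_unit j" using squarefree_D unfolding squarefree_def by simp
  hence "\<bar>j\<bar> = 1" by simp
  hence "j ^ 2 = 1" by (metis power2_abs one_power2)
  thus False using j D_gt_1 by simp
qed

end

section \<open>Integral ideals in Hermite normal form\<close>

lemma int_set_eq_multiples:
  fixes S :: "int set"
  assumes n_mem: "n \<in> S"
    and diff: "\<And>x y. x \<in> S \<Longrightarrow> y \<in> S \<Longrightarrow> x - y \<in> S"
    and mult: "\<And>q x. x \<in> S \<Longrightarrow> q * x \<in> S"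
    and n: "n \<noteq> 0"
  obtains g where "g > 0" "S = range (\<lambda>q. q * g)"
proof -
  define P where "P h \<longleftrightarrow> h > 0 \<and> int h \<in> S" for h :: nat
  have "sgn n * n \<in> S" using mult[OF n_mem] .
  hence "\<bar>n\<bar> \<in> S" by (simp only: abs_sgn mult.commute)
  hence "P (nat \<bar>n\<bar>)" using n unfolding P_def by simp
  define g where "g = int (LEAST h. P h)"
  have g: "g > 0" "g \<in> S" using LeastI[of P, OF \<open>P (nat \<bar>n\<bar>)\<close>] unfolding g_def P_def by auto
  have least: "g \<le> h" if "h > 0" "h \<in> S" for h
  proof -
    have "P (nat h)" using that unfolding P_def by simp
    hence "(LEAST h. P h) \<le> nat h" by (rule Least_le)
    thus ?thesis unfolding g_def using that by simp
  qed
  have dvd: "g dvd x" if "x \<in> S" for x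
  proof -
    have "x mod g \<in> S" using diff[OF that mult[OF g(2), of "x div g"]] by (simp add: minus_div_mult_eq_mod)
    hence "\<not> x mod g > 0" using least pos_mod_bound[OF g(1), of x] by (meson not_less)
    hence "x mod g = 0" using pos_mod_sign[OF g(1), of x] by simp
    thus ?thesis by (simp add: dvd_eq_mod_eq_0)
  qed
  have "S = range (\<lambda>q. q * g)"
  proof (intro set_eqI iffI)
    fix x assume "x \<in> S"
    then obtain q where "x = q * g" using dvd by (metis dvdE mult.commute)
    thus "x \<in> range (\<lambda>q. q * g)" by blast
  qed (use mult[OF g(2)] in auto)
  thus thesis using g(1) that by blast
qed

lemma triangular_mult_conj_identity:
  fixes a c g a1 c1 e \<kappa> r1 q1 r2 q2 :: int
  assumes "a = g * a1" "c = g * c1" "\<kappa> = c1 ^ 2 + c1 - a1 * e"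
  shows "(r1 * a + q1 * c) * ((r2 * a + q2 * c) + q2 * g) + \<kappa> * (q1 * g) * (- (q2 * g))
          = a * g * (r1 * r2 * a1 + r1 * q2 * c1 + q1 * r2 * c1 + r1 * q2 + q1 * q2 * e)"
    and "(r1 * a + q1 * c) * (- (q2 * g)) + (q1 * g) * ((r2 * a + q2 * c) + q2 * g)
          + (q1 * g) * (- (q2 * g)) = a * g * (q1 * r2 - r1 * q2)"
  unfolding assms power2_eq_square by algebra+

context quadratic_field
begin

definition int_ideal :: "qelt set \<Rightarrow> bool" where
  "int_ideal I \<longleftrightarrow> I \<subseteq> OK D \<and> add_subgroup I \<and> I \<noteq> {0} \<and> (\<forall>r\<in>OK D. \<forall>u\<in>I. kmul D r u \<in> I)"

lemma int_ideal_contains_int: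
  assumes I: "int_ideal I"
  obtains n where "n \<noteq> 0" "lincomb (1, 0) \<omega> n 0 \<in> I"
proof -
  obtain z where z: "z \<in> I" "z \<noteq> 0" using I unfolding int_ideal_def add_subgroup_def by blast
  have "z \<in> OK D" using I z(1) unfolding int_ideal_def by blast
  then obtain n where n: "knorm D z = of_int n" unfolding OK_def by (auto elim: Ints_cases)
  have "kmul D (kconj z) z \<in> I" using I z(1) OK_kconj[OF \<open>z \<in> OK D\<close>] unfolding int_ideal_def by blast
  moreover have "kmul D (kconj z) z = lincomb (1, 0) \<omega> n 0"
    unfolding kmul_comm[of D "kconj z"] kmul_kconj_self n by (simp add: lincomb_basis)
  ultimately have "lincomb (1, 0) \<omega> n 0 \<in> I" by simp
  moreover have "n \<noteq> 0" using knorm_nonzero[OF z(2)] n by simp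
  ultimately show thesis using that by blast
qed

lemma int_ideal_mem_iff:
  assumes I: "int_ideal I"
  obtains a g c where "a > 0" "g > 0"
    "\<And>u v. lincomb (1, 0) \<omega> u v \<in> I \<longleftrightarrow> (\<exists>r q. u = r * a + q * c \<and> v = q * g)"
proof -
  have I_sub: "add_subgroup I" and I_mult: "\<And>r u. r \<in> OK D \<Longrightarrow> u \<in> I \<Longrightarrow> kmul D r u \<in> I"
    using I unfolding int_ideal_def by blast+
  have I_diff: "lincomb (1, 0) \<omega> (s - s') (t - t') \<in> I"
    if "lincomb (1, 0) \<omega> s t \<in> I" "lincomb (1, 0) \<omega> s' t' \<in> I" for s t s' t'
    using add_subgroup_diff[OF I_sub that] by (simp add: lincomb_diff)
  have I_scale: "lincomb (1, 0) \<omega> (q * s) (q * t) \<in> I" if "lincomb (1, 0) \<omega> s t \<in> I" for q s t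
    using I_mult[OF lincomb_basis_in_OK[of q 0] that] by (simp add: kmul_lincomb_basis)
  obtain n where n: "n \<noteq> 0" "lincomb (1, 0) \<omega> n 0 \<in> I" using int_ideal_contains_int[OF I] .
  define I_int where "I_int = {u. lincomb (1, 0) \<omega> u 0 \<in> I}"
  define I_coeff where "I_coeff = {v. \<exists>u. lincomb (1, 0) \<omega> u v \<in> I}"
  have "n \<in> I_int" using n(2) unfolding I_int_def by simp
  moreover have "x - y \<in> I_int" if "x \<in> I_int" "y \<in> I_int" for x y
    using I_diff[of x 0 y 0] that unfolding I_int_def by simp
  moreover have "q * x \<in> I_int" if "x \<in> I_int" for q x
    using I_scale[of x 0 q] that unfolding I_int_def by simp
  ultimately obtain a where a: "a > 0" "I_int = range (\<lambda>r. r * a)"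
    using n(1) by (rule int_set_eq_multiples)
  have "lincomb (1, 0) \<omega> 0 n \<in> I"
    using I_mult[OF lincomb_basis_in_OK[of 0 1] n(2)] by (simp add: kmul_lincomb_basis)
  hence "n \<in> I_coeff" unfolding I_coeff_def by blast
  moreover have "x - y \<in> I_coeff" if xy: "x \<in> I_coeff" "y \<in> I_coeff" for x y
  proof -
    obtain u u' where "lincomb (1, 0) \<omega> u x \<in> I" "lincomb (1, 0) \<omega> u' y \<in> I"
      using xy unfolding I_coeff_def by blast
    thus ?thesis using I_diff unfolding I_coeff_def by blast
  qed
  moreover have "q * x \<in> I_coeff" if "x \<in> I_coeff" for q x
    using I_scale that unfolding I_coeff_def by blast
  ultimately obtain g where g: "g > 0" "I_coeff = range (\<lambda>q. q * g)"
    using n(1) by (rule int_set_eq_multiples)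
  have "1 * g \<in> I_coeff" unfolding g(2) by (rule rangeI)
  then obtain c where c: "lincomb (1, 0) \<omega> c g \<in> I" unfolding I_coeff_def by auto
  have "lincomb (1, 0) \<omega> u v \<in> I \<longleftrightarrow> (\<exists>r q. u = r * a + q * c \<and> v = q * g)" for u v
  proof
    assume uv: "lincomb (1, 0) \<omega> u v \<in> I"
    hence "v \<in> I_coeff" unfolding I_coeff_def by blast
    then obtain q where q: "v = q * g" unfolding g(2) by blast
    have "lincomb (1, 0) \<omega> (u - q * c) 0 \<in> I" using I_diff[OF uv I_scale[OF c, of q]] q by simp
    hence "u - q * c \<in> I_int" unfolding I_int_def by simp
    then obtain r where "u - q * c = r * a" unfolding a(2) by blast
    thus "\<exists>r q. u = r * a + q * c \<and> v = q * g" using q by (metis diff_add_cancel)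
  next
    assume "\<exists>r q. u = r * a + q * c \<and> v = q * g"
    then obtain r q where uv: "u = r * a + q * c" "v = q * g" by blast
    have "r * a \<in> I_int" unfolding a(2) by (rule rangeI)
    hence "lincomb (1, 0) \<omega> (r * a) 0 + lincomb (1, 0) \<omega> (q * c) (q * g) \<in> I"
      using add_subgroup_add[OF I_sub _ I_scale[OF c, of q]] unfolding I_int_def by simp
    thus "lincomb (1, 0) \<omega> u v \<in> I" unfolding lincomb_add uv by simp
  qed
  thus thesis by (rule that[OF a(1) g(1)])
qed

text \<open>Stability under multiplication by \<open>\<omega>\<close>, where \<open>\<omega>\<^sup>2 = \<omega> + \<kappa>\<close>, forces \<open>g | a\<close>, \<open>g | c\<close> and
  \<open>a | \<kappa>g - c(c + g)/g\<close>.\<close>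

lemma int_ideal_hnf:
  assumes I: "int_ideal I"
  obtains a c g a1 c1 e where "a > 0" "g > 0" "a = g * a1" "c = g * c1" "\<kappa> = c1 ^ 2 + c1 - a1 * e"
    "I = {lincomb (1, 0) \<omega> (r * a + q * c) (q * g) | r q. True}"
proof -
  obtain a g c where a: "a > 0" and g: "g > 0"
    and mem: "\<And>u v. lincomb (1, 0) \<omega> u v \<in> I \<longleftrightarrow> (\<exists>r q. u = r * a + q * c \<and> v = q * g)"
    using int_ideal_mem_iff[OF I] by metis
  have I_mult: "\<And>r u. r \<in> OK D \<Longrightarrow> u \<in> I \<Longrightarrow> kmul D r u \<in> I" and "I \<subseteq> lattice (1, 0) \<omega>"
    using I unfolding int_ideal_def OK_eq_lattice by blast+
  have I_eq: "I = {lincomb (1, 0) \<omega> (r * a + q * c) (q * g) | r q. True}"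
  proof (intro set_eqI iffI)
    fix x assume x: "x \<in> I"
    then obtain u v where x_eq: "x = lincomb (1, 0) \<omega> u v"
      using \<open>I \<subseteq> lattice (1, 0) \<omega>\<close> unfolding lattice_def by blast
    then obtain r q where "u = r * a + q * c" "v = q * g" using mem x by blast
    thus "x \<in> {lincomb (1, 0) \<omega> (r * a + q * c) (q * g) | r q. True}" using x_eq by blast
  qed (use mem in blast)
  have a_in: "lincomb (1, 0) \<omega> a 0 \<in> I" and c_in: "lincomb (1, 0) \<omega> c g \<in> I"
    unfolding mem by (intro exI[of _ 1] exI[of _ 0]; simp)+
  have "lincomb (1, 0) \<omega> 0 a \<in> I"
    using I_mult[OF lincomb_basis_in_OK[of 0 1] a_in] by (simp add: kmul_lincomb_basis)
  have "lincomb (1, 0) \<omega> (\<kappa> * g) (c + g) \<in> I"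
    using I_mult[OF lincomb_basis_in_OK[of 0 1] c_in] by (simp add: kmul_lincomb_basis)
  obtain r q where rq: "0 = r * a + q * c" "a = q * g" using mem \<open>lincomb (1, 0) \<omega> 0 a \<in> I\<close> by blast
  obtain r' q' where rq': "\<kappa> * g = r' * a + q' * c" "c + g = q' * g"
    using mem \<open>lincomb (1, 0) \<omega> (\<kappa> * g) (c + g) \<in> I\<close> by blast
  have "q * c = q * (g * - r)" using rq by (simp add: algebra_simps)
  moreover have "q \<noteq> 0" using rq(2) a by auto
  ultimately have c: "c = g * (- r)" using mult_cancel_left by blast
  hence "q' * g = (- r + 1) * g" using rq'(2) by (simp add: algebra_simps)
  hence "q' = - r + 1" using g by simp
  moreover have "\<kappa> * g = (r' * q + q' * (- r)) * g" using rq'(1) rq(2) c by (simp add: algebra_simps)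
  hence "\<kappa> = r' * q + q' * (- r)" using g by simp
  ultimately have "\<kappa> = r' * q + (- r + 1) * (- r)" by simp
  hence "\<kappa> = (- r) ^ 2 + (- r) - q * (- r')" by (simp add: power2_eq_square algebra_simps)
  moreover have "a = g * q" using rq(2) by simp
  ultimately show thesis using that[OF a g _ c _ I_eq] by blast
qed

lemma int_ideal_lattice:
  assumes "int_ideal I"
  obtains n e1 e2 where "n > 0" "card (cosets (OK D) I) = nat n" "I = lattice e1 e2"
    "det2 e1 e2 \<noteq> 0" "\<forall>y\<in>I. \<forall>z\<in>I. kmul D y (kconj z) \<in> kscale (of_int n) ` OK D"
proof -
  obtain a c g a1 c1 e where hnf: "a > 0" "g > 0" "a = g * a1" "c = g * c1" "\<kappa> = c1 ^ 2 + c1 - a1 * e"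
    and I_eq: "I = {lincomb (1, 0) \<omega> (r * a + q * c) (q * g) | r q. True}"
    by (rule int_ideal_hnf[OF assms])
  define e1 where "e1 = kscale (of_int a) (1, 0)"
  define e2 where "e2 = kscale (of_int c) (1, 0) + kscale (of_int g) \<omega>"
  have lat: "I = lattice e1 e2" unfolding I_eq e1_def e2_def by (rule lattice_triangular[symmetric])
  have det: "det2 e1 e2 \<noteq> 0" unfolding e1_def e2_def det2_def kscale_def using hnf(1,2) by simp
  have card: "card (cosets (OK D) I) = nat (a * g)"
    unfolding OK_eq_lattice I_eq lattice_triangular[symmetric]
    by (rule card_cosets_triangular[OF det2_basis hnf(1,2)])
  have conj: "\<forall>y\<in>I. \<forall>z\<in>I. kmul D y (kconj z) \<in> kscale (of_int (a * g)) ` OK D"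
  proof (intro ballI)
    fix y z assume yz: "y \<in> I" "z \<in> I"
    obtain r1 q1 r2 q2 where y: "y = lincomb (1, 0) \<omega> (r1 * a + q1 * c) (q1 * g)"
      and z: "z = lincomb (1, 0) \<omega> (r2 * a + q2 * c) (q2 * g)" using yz I_eq by blast
    have "kmul D y (kconj z) = lincomb (1, 0) \<omega>
      (a * g * (r1 * r2 * a1 + r1 * q2 * c1 + q1 * r2 * c1 + r1 * q2 + q1 * q2 * e))
      (a * g * (q1 * r2 - r1 * q2))"
      unfolding y z kconj_lincomb_basis kmul_lincomb_basis
      using triangular_mult_conj_identity[OF hnf(3-5)] by simp
    thus "kmul D y (kconj z) \<in> kscale (of_int (a * g)) ` OK D"
      unfolding kscale_of_int_lincomb[symmetric] by (simp only: imageI lincomb_basis_in_OK)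
  qed
  show thesis by (rule that[OF _ card lat det conj]) (use hnf(1,2) in simp)
qed

section \<open>Fractional ideals are lattices\<close>

definition ideal_denom :: "qelt set \<Rightarrow> nat" where
  "ideal_denom A = (LEAST d. d > 0 \<and> kscale (of_nat d) ` A \<subseteq> OK D)"

lemma ideal_norm_eq:
  "ideal_norm D A = of_nat (card (cosets (OK D) (kscale (of_nat (ideal_denom A)) ` A)))
                    / of_nat (ideal_denom A) ^ 2"
  by (simp only: ideal_norm_def ideal_denom_def Let_def)

lemma ideal_denom:
  assumes "frac_ideal D A"
  shows "ideal_denom A > 0" "kscale (of_nat (ideal_denom A)) ` A \<subseteq> OK D"
proof -
  have "\<exists>d. d > 0 \<and> kscale (of_nat d) ` A \<subseteq> OK D" using assms unfolding frac_ideal_def by blast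
  from LeastI_ex[OF this] show "ideal_denom A > 0" "kscale (of_nat (ideal_denom A)) ` A \<subseteq> OK D"
    unfolding ideal_denom_def by blast+
qed

lemma frac_ideal_kmul: "frac_ideal D A \<Longrightarrow> r \<in> OK D \<Longrightarrow> u \<in> A \<Longrightarrow> kmul D r u \<in> A"
  unfolding frac_ideal_def by blast

lemma frac_ideal_add_subgroup:
  assumes A: "frac_ideal D A" shows "add_subgroup A"
proof -
  have "kmul D (lincomb (1, 0) \<omega> (-1) 0) u = - u" for u
    by (cases u) (simp add: lincomb_basis kmul_def)
  thus ?thesis using A frac_ideal_kmul[OF A lincomb_basis_in_OK[of "-1" 0]]
    unfolding add_subgroup_def frac_ideal_def by simp
qed

lemma frac_ideal_kscale_int:
  assumes "frac_ideal D A" "u \<in> A" shows "kscale (of_int k) u \<in> A"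
proof -
  have "kmul D (lincomb (1, 0) \<omega> k 0) u = kscale (of_int k) u"
    by (simp add: lincomb_basis kmul_def kscale_def)
  thus ?thesis using frac_ideal_kmul[OF assms(1) lincomb_basis_in_OK[of k 0] assms(2)] by simp
qed

lemma int_ideal_denom_scaled:
  assumes A: "frac_ideal D A"
  shows "int_ideal (kscale (of_nat (ideal_denom A)) ` A)"
  unfolding int_ideal_def
proof (intro conjI)
  let ?d = "of_nat (ideal_denom A) :: rat"
  show "kscale ?d ` A \<subseteq> OK D" by (rule ideal_denom(2)[OF A])
  show "add_subgroup (kscale ?d ` A)"
    using add_subgroup_image[OF kscale_add frac_ideal_add_subgroup[OF A]] .
  obtain u where u: "u \<in> A" "u \<noteq> 0" using A unfolding frac_ideal_def by blast
  hence "kscale ?d u \<noteq> 0" using ideal_denom(1)[OF A] by (simp add: kscale_eq_0_iff)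
  thus "kscale ?d ` A \<noteq> {0}" using u(1) by blast
  show "\<forall>r\<in>OK D. \<forall>u\<in>kscale ?d ` A. kmul D r u \<in> kscale ?d ` A"
    using frac_ideal_kmul[OF A] by (auto simp: kmul_kscale_right)
qed

lemma frac_ideal_lattice:
  assumes A: "frac_ideal D A"
  obtains f1 f2 where "ideal_norm D A > 0" "A = lattice f1 f2" "det2 f1 f2 \<noteq> 0"
    "\<forall>y\<in>A. \<forall>z\<in>A. kmul D y (kconj z) \<in> kscale (ideal_norm D A) ` OK D"
proof -
  define d where "d = (of_nat (ideal_denom A) :: rat)"
  have d: "d > 0" using ideal_denom(1)[OF A] unfolding d_def by simp
  obtain n e1 e2 where n: "n > 0" and card: "card (cosets (OK D) (kscale d ` A)) = nat n"
    and I: "kscale d ` A = lattice e1 e2" and det: "det2 e1 e2 \<noteq> 0"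
    and conj: "\<forall>y\<in>kscale d ` A. \<forall>z\<in>kscale d ` A. kmul D y (kconj z) \<in> kscale (of_int n) ` OK D"
    by (rule int_ideal_lattice[OF int_ideal_denom_scaled[OF A], folded d_def])
  have norm: "ideal_norm D A = of_int n / d ^ 2" unfolding ideal_norm_eq d_def[symmetric] card using n by simp
  have A_eq: "A = kscale (1 / d) ` kscale d ` A" using d by (simp add: image_image kscale_kscale)
  have "\<forall>y\<in>A. \<forall>z\<in>A. kmul D y (kconj z) \<in> kscale (ideal_norm D A) ` OK D"
  proof (intro ballI)
    fix y z assume "y \<in> A" "z \<in> A"
    hence "kscale d y \<in> kscale d ` A" "kscale d z \<in> kscale d ` A" by simp_all
    then obtain w where "w \<in> OK D" "kmul D (kscale d y) (kconj (kscale d z)) = kscale (of_int n) w"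
      using conj by blast
    moreover have "kmul D y (kconj z) = kscale (1 / d ^ 2) (kmul D (kscale d y) (kconj (kscale d z)))"
      using d by (simp add: kconj_kscale kmul_kscale_left kmul_kscale_right kscale_kscale power2_eq_square)
    ultimately show "kmul D y (kconj z) \<in> kscale (ideal_norm D A) ` OK D"
      unfolding norm by (simp add: kscale_kscale)
  qed
  moreover have "A = lattice (kscale (1 / d) e1) (kscale (1 / d) e2)"
    using A_eq unfolding I kscale_lattice .
  moreover have "det2 (kscale (1 / d) e1) (kscale (1 / d) e2) \<noteq> 0" using det d by (simp add: det2_kscale)
  moreover have "ideal_norm D A > 0" unfolding norm using n d by simp
  ultimately show thesis using that by blast
qed

abbreviation mul_sqrtD :: "qelt \<Rightarrow> qelt" where
  "mul_sqrtD \<equiv> kmul D (0, 1)"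

lemma mul_sqrtD_eq: "mul_sqrtD x = (of_int D * snd x, fst x)"
  by (simp add: kmul_def)

lemma inj_mul_sqrtD: "inj mul_sqrtD"
  using D_gt_1 by (intro injI) (simp add: mul_sqrtD_eq prod_eq_iff)

lemma mul_sqrtD_mul_sqrtD: "mul_sqrtD (mul_sqrtD x) = kscale (of_int D) x"
  by (simp add: mul_sqrtD_eq kscale_def)

lemma sqrtD_in_OK: "(0, 1) \<in> OK D"
proof -
  have "(0, 1) = lincomb (1, 0) \<omega> (- 1) 2" by (simp add: lincomb_basis)
  thus ?thesis by simp
qed

lemma mul_sqrtD_lattice: "mul_sqrtD ` lattice e1 e2 = lattice (mul_sqrtD e1) (mul_sqrtD e2)"
proof -
  have "mul_sqrtD (lincomb e1 e2 s t) = lincomb (mul_sqrtD e1) (mul_sqrtD e2) s t" for s t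
    by (simp only: lincomb_def kmul_add_right kmul_kscale_right)
  thus ?thesis unfolding lattice_def image_Collect by metis
qed

lemma frac_ideal_mul_sqrtD_subset: "frac_ideal D A \<Longrightarrow> mul_sqrtD ` A \<subseteq> A"
  using frac_ideal_kmul sqrtD_in_OK by blast

text \<open>\<open>[\<a> : \<surd>D\<a>]\<^sup>2 = [\<a> : D\<a>] = D\<^sup>2\<close>, the middle index being that of a scaled lattice.\<close>

lemma card_cosets_mul_sqrtD:
  assumes A: "frac_ideal D A"
  shows "card (cosets A (mul_sqrtD ` A)) = nat D"
proof -
  obtain f1 f2 where A_eq: "A = lattice f1 f2" and det: "det2 f1 f2 \<noteq> 0"
    using frac_ideal_lattice[OF A] by metis
  have DA: "kscale (of_int D) ` A = lattice (kscale (of_int D) f1) (kscale (of_int 0) f1 + kscale (of_int D) f2)"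
    unfolding A_eq kscale_lattice by (simp add: kscale_def zero_prod_def)
  have "kscale (of_int D) ` A = mul_sqrtD ` mul_sqrtD ` A"
    by (simp only: image_image mul_sqrtD_mul_sqrtD)
  hence "card (cosets (mul_sqrtD ` A) (kscale (of_int D) ` A)) = card (cosets A (mul_sqrtD ` A))"
    unfolding cosets_eq_add_cosets using card_cosets_image[OF kmul_add_right inj_mul_sqrtD] by simp
  moreover have "card (cosets A (kscale (of_int D) ` A))
      = card (cosets (mul_sqrtD ` A) (kscale (of_int D) ` A)) * card (cosets A (mul_sqrtD ` A))"
  proof -
    have "add_subgroup A" "add_subgroup (mul_sqrtD ` A)" "add_subgroup (kscale (of_int D) ` A)"
      unfolding A_eq mul_sqrtD_lattice kscale_lattice by (rule add_subgroup_lattice)+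
    moreover have "kscale (of_int D) ` A \<subseteq> mul_sqrtD ` A"
      unfolding \<open>kscale (of_int D) ` A = mul_sqrtD ` mul_sqrtD ` A\<close>
      using frac_ideal_mul_sqrtD_subset[OF A] by blast
    ultimately show ?thesis unfolding cosets_eq_add_cosets
      using frac_ideal_mul_sqrtD_subset[OF A] by (rule index_mult)
  qed
  moreover have "card (cosets A (kscale (of_int D) ` A)) = nat (D * D)"
    unfolding DA using A_eq card_cosets_triangular[OF det, of D D 0] D_gt_1 by simp
  ultimately have "card (cosets A (mul_sqrtD ` A)) ^ 2 = nat D ^ 2"
    using D_gt_1 by (simp add: power2_eq_square nat_mult_distrib)
  thus ?thesis by (simp add: power2_eq_iff_nonneg)
qed

abbreviation div_sqrtD :: "qelt \<Rightarrow> qelt" where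
  "div_sqrtD \<equiv> kmul D (0, 1 / of_int D)"

lemma div_sqrtD_eq: "div_sqrtD x = (snd x, fst x / of_int D)"
  using D_gt_1 by (simp add: kmul_def)

lemma mul_sqrtD_div_sqrtD: "mul_sqrtD (div_sqrtD x) = x"
  using D_gt_1 by (simp add: div_sqrtD_eq mul_sqrtD_eq)

lemma div_sqrtD_mul_sqrtD: "div_sqrtD (mul_sqrtD x) = x"
  using D_gt_1 by (simp add: div_sqrtD_eq mul_sqrtD_eq)

lemma inv_different_iff: "x \<in> inv_different D \<longleftrightarrow> mul_sqrtD x \<in> OK D"
proof
  assume "x \<in> inv_different D"
  moreover have "(0, 1) \<in> different D"
    unfolding different_def using lincomb_basis_in_OK[of 1 0] by (force simp: lincomb_basis kmul_def)
  ultimately have "kmul D x (0, 1) \<in> OK D" unfolding inv_different_def by blast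
  thus "mul_sqrtD x \<in> OK D" by (simp only: kmul_comm[of D "(0, 1)"])
next
  assume x: "mul_sqrtD x \<in> OK D"
  show "x \<in> inv_different D" unfolding inv_different_def different_def
  proof (intro CollectI ballI)
    fix y assume "y \<in> mul_sqrtD ` OK D"
    then obtain u where u: "u \<in> OK D" "y = mul_sqrtD u" by blast
    have "kmul D x y = kmul D (mul_sqrtD x) u" unfolding u(2) by (metis kmul_assoc kmul_comm)
    thus "kmul D x y \<in> OK D" using OK_kmul[OF x u(1)] by simp
  qed
qed

lemma mul_sqrtD_sum_in_frac_ideal:
  fixes n :: nat
  assumes A: "frac_ideal D A" and fg: "\<forall>i<n. f i \<in> A \<and> g i \<in> inv_different D"
  shows "mul_sqrtD (\<Sum>i<n. kmul D (f i) (g i)) \<in> A"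
  using fg
proof (induction n)
  case 0
  thus ?case using A by (simp add: mul_sqrtD_eq frac_ideal_def zero_prod_def)
next
  case (Suc n)
  have "mul_sqrtD (kmul D (f n) (g n)) = kmul D (mul_sqrtD (g n)) (f n)"
    by (metis kmul_assoc kmul_comm)
  moreover have "mul_sqrtD (g n) \<in> OK D" using Suc.prems inv_different_iff by blast
  ultimately have "mul_sqrtD (kmul D (f n) (g n)) \<in> A" using frac_ideal_kmul[OF A] Suc.prems by simp
  moreover have "mul_sqrtD (\<Sum>i<n. kmul D (f i) (g i)) \<in> A" using Suc by simp
  ultimately show ?case
    using add_subgroup_add[OF frac_ideal_add_subgroup[OF A]] by (simp add: kmul_add_right)
qed

lemma ideal_mult_inv_different:
  assumes A: "frac_ideal D A"
  shows "ideal_mult D A (inv_different D) = div_sqrtD ` A"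
proof (intro set_eqI iffI)
  fix x assume "x \<in> ideal_mult D A (inv_different D)"
  then obtain n :: nat and f g where "\<forall>i<n. f i \<in> A \<and> g i \<in> inv_different D" "x = (\<Sum>i<n. kmul D (f i) (g i))"
    unfolding ideal_mult_def by blast
  hence "mul_sqrtD x \<in> A" using mul_sqrtD_sum_in_frac_ideal[OF A] by blast
  thus "x \<in> div_sqrtD ` A" using div_sqrtD_mul_sqrtD by (metis image_eqI)
next
  fix x assume "x \<in> div_sqrtD ` A"
  then obtain y where y: "y \<in> A" "x = div_sqrtD y" by blast
  have "mul_sqrtD (0, 1 / of_int D) = (1, 0)" using D_gt_1 by (simp add: mul_sqrtD_eq)
  hence "(0, 1 / of_int D) \<in> inv_different D"
    unfolding inv_different_iff using lincomb_basis_in_OK[of 1 0] by (simp add: lincomb_basis)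
  moreover have "x = (\<Sum>i<Suc 0. kmul D ((\<lambda>_. y) i) ((\<lambda>_. (0, 1 / of_int D)) i))"
    using y(2) by (simp add: kmul_comm)
  ultimately show "x \<in> ideal_mult D A (inv_different D)" unfolding ideal_mult_def using y(1)
    by (intro CollectI exI[of _ "Suc 0"] exI[of _ "\<lambda>_. y"] exI[of _ "\<lambda>_. (0, 1 / of_int D)"]) simp
qed

section \<open>Counting solutions of the norm congruence\<close>

definition norm_cong_set :: "qelt set \<Rightarrow> int \<Rightarrow> int \<Rightarrow> qelt set" where
  "norm_cong_set A m B = {y \<in> A. rat_cong (knorm D y / ideal_norm D A) (of_int m) B}"

lemma knorm_div_sqrtD: "knorm D (div_sqrtD y) = - knorm D y / of_int D"
  using D_gt_1 by (simp add: div_sqrtD_eq knorm_eq field_simps power2_eq_square)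

lemma rat_cong_div_sqrtD_iff:
  "rat_cong (knorm D (div_sqrtD y) / c) (- of_int m / of_int D) (int b)
   \<longleftrightarrow> rat_cong (knorm D y / c) (of_int m) (int b * D)"
proof -
  have D0: "(of_int D :: rat) \<noteq> 0" using D_gt_1 by simp
  have "knorm D (div_sqrtD y) / c - (- of_int m / of_int D) = - (knorm D y / c - of_int m) / of_int D"
    unfolding knorm_div_sqrtD using D0 by (simp add: field_simps)
  moreover have "- x / of_int D = of_int (int b) * of_int j \<longleftrightarrow> x = of_int (int b * D) * of_int (- j)"
    for x :: rat and j using D0 by (auto simp: field_simps)
  ultimately show ?thesis unfolding rat_cong_def by (metis minus_minus)
qed

lemma knorm_add_kscale_mul_sqrtD:
  "knorm D (y + kscale s (mul_sqrtD w))
   = knorm D y - 2 * s * of_int D * snd (kmul D y (kconj w)) - s ^ 2 * of_int D * knorm D w"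
  by (simp add: knorm_eq mul_sqrtD_eq kmul_def kconj_def kscale_def algebra_simps power2_eq_square)

text \<open>Since \<open>yw' \<in> N(\<a>)\<O>\<^sub>K\<close>, translating \<open>y\<close> by \<open>b\<surd>Dw\<close> changes \<open>N(y)/N(\<a>)\<close> by a multiple of \<open>bD\<close>.\<close>

lemma norm_cong_set_translate:
  assumes A: "frac_ideal D A" and y: "y \<in> norm_cong_set A m (int b * D)" and w: "w \<in> A"
  shows "y + kscale (of_nat b) (mul_sqrtD w) \<in> norm_cong_set A m (int b * D)"
proof -
  define NA where "NA = ideal_norm D A"
  obtain NA_pos: "NA > 0" and conj: "\<forall>y\<in>A. \<forall>z\<in>A. kmul D y (kconj z) \<in> kscale NA ` OK D"
    using frac_ideal_lattice[OF A] unfolding NA_def by metis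
  have yA: "y \<in> A" using y unfolding norm_cong_set_def by blast
  obtain X Y where XY: "kmul D y (kconj w) = kscale NA (lincomb (1, 0) \<omega> X Y)"
    using conj yA w unfolding OK_eq_lattice lattice_def by blast
  obtain X' Y' where "kmul D w (kconj w) = kscale NA (lincomb (1, 0) \<omega> X' Y')"
    using conj w unfolding OK_eq_lattice lattice_def by blast
  hence "knorm D w = NA * (of_int X' + of_int Y' / 2)" "0 = NA * (of_int Y' / 2)"
    unfolding kmul_kconj_self by (simp_all add: kscale_def lincomb_basis)
  hence norm_w: "knorm D w = NA * of_int X'" using NA_pos by simp
  have snd_yw: "snd (kmul D y (kconj w)) = NA * (of_int Y / 2)"
    using XY by (simp add: kscale_def lincomb_basis)
  obtain j where j: "knorm D y / NA - of_int m = of_int (int b * D) * of_int j"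
    using y unfolding norm_cong_set_def rat_cong_def NA_def by blast
  have "knorm D (y + kscale (of_nat b) (mul_sqrtD w)) / NA - of_int m
      = (knorm D y / NA - of_int m) - of_int (int b * D) * of_int (Y + int b * X')"
    unfolding knorm_add_kscale_mul_sqrtD snd_yw norm_w using NA_pos
    by (simp add: field_simps power2_eq_square)
  also have "\<dots> = of_int (int b * D) * of_int (j - (Y + int b * X'))"
    unfolding j by (simp add: algebra_simps)
  finally have "rat_cong (knorm D (y + kscale (of_nat b) (mul_sqrtD w)) / NA) (of_int m) (int b * D)"
    unfolding rat_cong_def by blast
  moreover have "mul_sqrtD w \<in> A" using frac_ideal_mul_sqrtD_subset[OF A] w by blast
  hence "kscale (of_nat b) (mul_sqrtD w) \<in> A" using frac_ideal_kscale_int[OF A, of _ "int b"] by simp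
  hence "y + kscale (of_nat b) (mul_sqrtD w) \<in> A"
    using add_subgroup_add[OF frac_ideal_add_subgroup[OF A] yA] by blast
  ultimately show ?thesis unfolding norm_cong_set_def NA_def by blast
qed

lemma G_sum_eq_card_cosets:
  assumes A: "frac_ideal D A"
  shows "G_sum D b A m
         = card (cosets (norm_cong_set A m (int b * D)) (kscale (of_nat b) ` mul_sqrtD ` A))"
proof -
  have "{l \<in> ideal_mult D A (inv_different D).
          rat_cong (knorm D l / ideal_norm D A) (- of_int m / of_int D) (int b)}
        = div_sqrtD ` norm_cong_set A m (int b * D)"
    by (simp only: ideal_mult_inv_different[OF A] norm_cong_set_def Compr_image_eq rat_cong_div_sqrtD_iff)
  moreover have "kscale (of_nat b) ` A = div_sqrtD ` kscale (of_nat b) ` mul_sqrtD ` A"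
    by (simp add: image_image kmul_kscale_right div_sqrtD_mul_sqrtD)
  moreover have "inj div_sqrtD" by (metis injI mul_sqrtD_div_sqrtD)
  note card_cosets_image[OF kmul_add_right[of D "(0, 1 / of_int D)"] this]
  ultimately show ?thesis unfolding G_sum_def cosets_def[symmetric] cosets_eq_add_cosets by simp
qed

lemma N_count_eq_card_cosets:
  "N_count D (b * nat D) A m
   = card (cosets (norm_cong_set A m (int b * D)) (kscale (of_nat b) ` mul_sqrtD ` mul_sqrtD ` A))"
proof -
  have "kscale (of_nat (b * nat D)) x = kscale (of_nat b) (mul_sqrtD (mul_sqrtD x))" for x
    unfolding mul_sqrtD_mul_sqrtD kscale_kscale using D_gt_1 by simp
  hence scale: "kscale (of_nat (b * nat D)) ` A = kscale (of_nat b) ` mul_sqrtD ` mul_sqrtD ` A"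
    by (simp add: image_image)
  have modulus: "int (b * nat D) = int b * D" using D_gt_1 by simp
  show ?thesis by (simp only: N_count_def norm_cong_set_def cosets_def scale modulus)
qed

lemma card_cosets_scaled_mul_sqrtD:
  assumes A: "frac_ideal D A" and c: "c \<noteq> 0"
  shows "card (cosets (kscale c ` mul_sqrtD ` A) (kscale c ` mul_sqrtD ` mul_sqrtD ` A)) = nat D"
proof -
  have "card (cosets (kscale c ` mul_sqrtD ` A) (kscale c ` mul_sqrtD ` mul_sqrtD ` A))
      = card (cosets A (mul_sqrtD ` A))"
    unfolding cosets_eq_add_cosets
    using card_cosets_image[OF kscale_add inj_kscale[OF c]] card_cosets_image[OF kmul_add_right inj_mul_sqrtD]
    by simp
  thus ?thesis using card_cosets_mul_sqrtD[OF A] by simp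
qed

lemma N_count_eq_mult_G_sum:
  assumes A: "frac_ideal D A" and b: "b \<ge> 1"
  shows "N_count D (b * nat D) A m = nat D * G_sum D b A m"
proof -
  let ?P = "norm_cong_set A m (int b * D)"
  let ?G = "kscale (of_nat b) ` mul_sqrtD ` A"
  let ?H = "kscale (of_nat b) ` mul_sqrtD ` mul_sqrtD ` A"
  obtain f1 f2 where A_eq: "A = lattice f1 f2" using frac_ideal_lattice[OF A] by metis
  have "add_subgroup ?G" "add_subgroup ?H"
    unfolding A_eq mul_sqrtD_lattice kscale_lattice by (rule add_subgroup_lattice)+
  moreover have "?H \<subseteq> ?G" using frac_ideal_mul_sqrtD_subset[OF A] by blast
  moreover have "x + g \<in> ?P" if "x \<in> ?P" "g \<in> ?G" for x g
    using norm_cong_set_translate[OF A] that by blast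
  ultimately have "card (cosets ?P ?H) = card (cosets ?G ?H) * card (cosets ?P ?G)"
    unfolding cosets_eq_add_cosets by (rule card_cosets_eq_index_mult)
  thus ?thesis using card_cosets_scaled_mul_sqrtD[OF A] b
    unfolding N_count_eq_card_cosets G_sum_eq_card_cosets[OF A] by simp
qed

end

theorem mainTheorem1:
  fixes D :: int and b :: nat and A :: "qelt set" and m :: int
  assumes "D > 1" and "D mod 4 = 1" and "squarefree D"
    and "b \<ge> 1" and "frac_ideal D A"
  shows "real (G_sum D b A m) = real (N_count D (b * nat D) A m) / real_of_int D"
proof -
  interpret quadratic_field D using assms(1-3) by unfold_locales
  show ?thesis using N_count_eq_mult_G_sum[OF assms(5,4)] assms(1) by simp
qed

end
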